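(* Let $0<c<1$. There exists a set $A\subseteq\mathbb{N}$ such that $R_A(n)=cn+O(\sqrt{n}\log^{1/2}n)$ as $n\to\infty$.
   Context: $\mathbb{N}$ denotes the set of non-negative integers. For $A\subseteq\mathbb{N}$, $R_A(n)$ denotes the number of ordered pairs $(a,a')$ with $a,a'\in A$ and $a+a'=n$. *)

theory Defs
  imports "HOL-Analysis.Analysis" "HOL-Library.Landau_Symbols"
begin

definition rep_count :: "nat set \<Rightarrow> nat \<Rightarrow> nat" where
  "rep_count A n = card {(a, a'). a \<in> A \<and> a' \<in> A \<and> a + a' = n}"

end

theory Submission
  imports Defs "HOL-Probability.Probability"
begin

text \<open>Choose \<open>A\<close> at random, each natural number being in \<open>A\<close> independently with probability \<open>p = \<surd>c\<close>.
  Apart from the middle term \<open>n/2\<close>, \<open>R\<^sub>A(n)\<close> is twice the number of \<open>a < n/2\<close> with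
  \<open>a, n - a \<in> A\<close>, a sum of \<open>\<lceil>n/2\<rceil>\<close> independent indicators of probability \<open>p\<^sup>2 = c\<close>.
  By Hoeffding's inequality this sum is off from its mean by at least \<open>\<surd>(n ln n)\<close> with
  probability at most \<open>2/n\<^sup>2\<close>; these probabilities are summable, so by Borel--Cantelli almost
  every \<open>A\<close> satisfies \<open>|R\<^sub>A(n) - cn| \<le> 2\<surd>(n ln n) + 1\<close> for all large \<open>n\<close>.\<close>

definition pair_count :: "nat set \<Rightarrow> nat \<Rightarrow> nat" where
  "pair_count A n = card {a. 2 * a < n \<and> a \<in> A \<and> n - a \<in> A}"

lemma rep_count_eq_pair_count:
  "rep_count A n = 2 * pair_count A n + of_bool (even n \<and> n div 2 \<in> A)"
proof -
  define S where "S = {(a, a'). a \<in> A \<and> a' \<in> A \<and> a + a' = n}"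
  define below where "below = {x \<in> S. fst x < snd x}"
  define diag where "diag = {x \<in> S. fst x = snd x}"
  have "finite S"
    by (rule finite_subset[of _ "{..n} \<times> {..n}"]) (auto simp: S_def)
  then have fin: "finite below" "finite (prod.swap ` below)" "finite diag"
    by (auto simp: below_def diag_def)
  have S_split: "S = below \<union> prod.swap ` below \<union> diag"
    by (auto simp: S_def below_def diag_def)
  have "below = (\<lambda>a. (a, n - a)) ` {a. 2 * a < n \<and> a \<in> A \<and> n - a \<in> A}"
    by (force simp: S_def below_def image_iff)
  then have card_below: "card below = pair_count A n"
    by (simp add: pair_count_def card_image inj_on_def)
  have "diag = (if even n \<and> n div 2 \<in> A then {(n div 2, n div 2)} else {})"
    by (auto simp: diag_def S_def)
  then have card_diag: "card diag = of_bool (even n \<and> n div 2 \<in> A)"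
    by simp
  have "card S = card below + card (prod.swap ` below) + card diag"
    unfolding S_split using fin
    by (subst card_Un_disjoint; auto simp: below_def diag_def)+
  then show ?thesis
    using card_below card_diag by (simp add: S_def rep_count_def card_image)
qed

lemma rep_count_deviation_le:
  fixes c :: real
  assumes "0 \<le> c" "c \<le> 1"
  shows "\<bar>real (rep_count A n) - c * real n\<bar>
           \<le> 2 * \<bar>real (pair_count A n) - real ((n + 1) div 2) * c\<bar> + 1"
proof -
  define h where "h = (n + 1) div 2"
  define d :: real where "d = of_bool (even n \<and> n div 2 \<in> A)"
  define t where "t = d + c * of_bool (odd n)"
  have "2 * real h = real n + of_bool (odd n)"
    by (auto simp: h_def elim!: evenE oddE)
  then have eq: "real (rep_count A n) - c * real n = 2 * (real (pair_count A n) - real h * c) + t"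
    by (simp add: rep_count_eq_pair_count d_def t_def algebra_simps)
  have "\<bar>t\<bar> \<le> 1"
    using assms by (auto simp: t_def d_def)
  moreover have "\<bar>real (rep_count A n) - c * real n\<bar> \<le> \<bar>2 * (real (pair_count A n) - real h * c)\<bar> + \<bar>t\<bar>"
    unfolding eq by (rule abs_triangle_ineq)
  ultimately show ?thesis
    unfolding h_def abs_mult by simp
qed

lemma indep_vars_coordinates:
  fixes N :: "'a measure"
  assumes N: "prob_space N" and J: "finite J" "J \<noteq> {}"
  shows "prob_space.indep_vars (PiM UNIV (\<lambda>_::'i. N)) (\<lambda>_. N) (\<lambda>i \<omega>. \<omega> i) J"
proof -
  interpret product_prob_space "\<lambda>_::'i. N" UNIV
    using N by (rule product_prob_spaceI)
  interpret P: prob_space "PiM UNIV (\<lambda>_::'i. N)"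
    using N by (intro prob_space_PiM)
  have "distr (PiM UNIV (\<lambda>_. N)) (PiM J (\<lambda>_. N)) (\<lambda>x. \<lambda>i\<in>J. x i) = PiM J (\<lambda>_. N)"
    using distr_PiM_restrict_finite[of J] J by (simp add: restrict_def)
  moreover have "PiM J (\<lambda>i. distr (PiM UNIV (\<lambda>_. N)) N (\<lambda>\<omega>. \<omega> i)) = PiM J (\<lambda>_. N)"
    by (intro PiM_cong refl) (simp add: PiM_component)
  ultimately show ?thesis
    by (subst P.indep_vars_iff_distr_eq_PiM') (use J in auto)
qed

definition bernoulli_sequence :: "real \<Rightarrow> (nat \<Rightarrow> bool) measure" where
  "bernoulli_sequence p = PiM UNIV (\<lambda>_. measure_pmf (bernoulli_pmf p))"

lemma prob_space_bernoulli_sequence: "prob_space (bernoulli_sequence p)"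
  unfolding bernoulli_sequence_def by (intro prob_space_PiM measure_pmf.prob_space_axioms)

lemma space_bernoulli_sequence: "space (bernoulli_sequence p) = UNIV"
  by (simp add: bernoulli_sequence_def space_PiM)

lemma measure_bernoulli_sequence_both:
  assumes "0 \<le> p" "p \<le> 1" "i \<noteq> j"
  shows "measure (bernoulli_sequence p) {\<omega>. \<omega> i \<and> \<omega> j} = p\<^sup>2"
proof -
  interpret PP: product_prob_space "\<lambda>_::nat. measure_pmf (bernoulli_pmf p)" UNIV
    by (intro product_prob_spaceI measure_pmf.prob_space_axioms)
  interpret P: prob_space "bernoulli_sequence p"
    by (rule prob_space_bernoulli_sequence)
  have "{\<omega>. \<omega> i \<and> \<omega> j} = {\<omega> \<in> space (bernoulli_sequence p). \<forall>k\<in>{i, j}. \<omega> k \<in> {True}}"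
    by (auto simp: space_bernoulli_sequence)
  moreover have "emeasure (bernoulli_sequence p) \<dots> = (\<Prod>k\<in>{i, j}. emeasure (bernoulli_pmf p) {True})"
    unfolding bernoulli_sequence_def by (rule PP.emeasure_PiM_Collect) auto
  ultimately have "emeasure (bernoulli_sequence p) {\<omega>. \<omega> i \<and> \<omega> j} = ennreal (p\<^sup>2)"
    using assms by (simp add: measure_pmf.emeasure_eq_measure measure_pmf_single power2_eq_square ennreal_mult)
  then show ?thesis
    using assms by (simp add: P.emeasure_eq_measure)
qed

lemma pair_count_deviation_prob:
  assumes p: "0 \<le> p" "p \<le> 1" and n: "n \<ge> 1" and e: "e \<ge> 0"
  shows "\<P>(\<omega> in bernoulli_sequence p.
             e \<le> \<bar>real (pair_count {i. \<omega> i} n) - real ((n + 1) div 2) * p\<^sup>2\<bar>)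
         \<le> 2 * exp (-2 * e\<^sup>2 / real ((n + 1) div 2))"
proof -
  define M where "M = bernoulli_sequence p"
  define N where "N = measure_pmf (bernoulli_pmf p)"
  define I where "I = {..<(n + 1) div 2}"
  define X where "X = (\<lambda>i (\<omega>::nat \<Rightarrow> bool). of_bool (\<omega> i \<and> \<omega> (n - i)) :: real)"
  interpret P: prob_space M
    unfolding M_def by (rule prob_space_bernoulli_sequence)
  have I_iff: "i \<in> I \<longleftrightarrow> 2 * i < n" for i
    by (auto simp: I_def)
  have sum_X: "(\<Sum>i\<in>I. X i \<omega>) = real (pair_count {i. \<omega> i} n)" for \<omega>
  proof -
    have "I \<inter> {i. \<omega> i \<and> \<omega> (n - i)} = {a. 2 * a < n \<and> a \<in> {i. \<omega> i} \<and> n - a \<in> {i. \<omega> i}}"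
      using I_iff by auto
    then show ?thesis
      by (simp add: X_def I_def sum_of_bool_eq pair_count_def)
  qed
  have "P.indep_vars (\<lambda>_. N) (\<lambda>i \<omega>. \<omega> i) {..n}"
    unfolding M_def bernoulli_sequence_def N_def
    by (rule indep_vars_coordinates) (auto intro: measure_pmf.prob_space_axioms)
  then have "P.indep_vars (\<lambda>j. PiM {j, n - j} (\<lambda>_. N)) (\<lambda>j \<omega>. restrict (\<lambda>i. \<omega> i) {j, n - j}) I"
    by (rule P.indep_vars_restrict) (auto simp: I_iff disjoint_family_on_def)
  then have "P.indep_vars (\<lambda>_. borel) (\<lambda>j \<omega>. of_bool (restrict \<omega> {j, n - j} j \<and> restrict \<omega> {j, n - j} (n - j)) :: real) I"
    by (rule P.indep_vars_compose2[where Y = "\<lambda>j f. of_bool (f j \<and> f (n - j)) :: real"])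
       (simp add: N_def)
  then have indep: "P.indep_vars (\<lambda>_. borel) X I"
    by (simp add: X_def)
  have expectation_X: "P.expectation (X i) = p\<^sup>2" if "i \<in> I" for i
  proof -
    have "X i = indicator {\<omega>. \<omega> i \<and> \<omega> (n - i)}"
      by (auto simp: X_def indicator_def)
    moreover have "i \<noteq> n - i"
      using that I_iff by auto
    ultimately show ?thesis
      using p by (simp add: M_def space_bernoulli_sequence measure_bernoulli_sequence_both)
  qed
  interpret H: Hoeffding_ineq M I X "\<lambda>_. 0" "\<lambda>_. 1" "\<Sum>i\<in>I. P.expectation (X i)"
  proof unfold_locales
    show "finite I"
      by (simp add: I_def)
    show "P.indep_vars (\<lambda>_. borel) X I"
      by (rule indep)
    show "AE \<omega> in M. X i \<omega> \<in> {0..1}" for i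
      by (simp add: X_def)
  qed
  have mean: "(\<Sum>i\<in>I. P.expectation (X i)) = real ((n + 1) div 2) * p\<^sup>2"
    by (simp add: expectation_X I_def)
  have variance_bound: "(\<Sum>i\<in>I. (1 - 0::real)\<^sup>2) = real ((n + 1) div 2)"
    by (simp add: I_def)
  have "(\<Sum>i\<in>I. (1 - 0::real)\<^sup>2) > 0"
    using n unfolding variance_bound by simp
  from H.Hoeffding_ineq_abs_ge[OF e this]
  have "\<P>(\<omega> in M. e \<le> \<bar>real (pair_count {i. \<omega> i} n) - real ((n + 1) div 2) * p\<^sup>2\<bar>)
          \<le> 2 * exp (-2 * e\<^sup>2 / real ((n + 1) div 2))"
    unfolding sum_X mean variance_bound .
  then show ?thesis
    by (simp only: M_def)
qed

lemma pair_count_large_deviation_prob: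
  assumes p: "0 \<le> p" "p \<le> 1" and n: "n \<ge> 1"
  shows "\<P>(\<omega> in bernoulli_sequence p.
             sqrt (real n * ln (real n)) \<le> \<bar>real (pair_count {i. \<omega> i} n) - real ((n + 1) div 2) * p\<^sup>2\<bar>)
         \<le> 2 / real n ^ 2"
proof -
  define h where "h = (n + 1) div 2"
  define e where "e = sqrt (real n * ln (real n))"
  have h: "1 \<le> real h" "real h \<le> real n"
    using n by (auto simp: h_def)
  have ln_n: "0 \<le> ln (real n)"
    using n by simp
  then have e: "0 \<le> e" "e\<^sup>2 = real n * ln (real n)"
    by (simp_all add: e_def)
  have "real h * ln (real n) \<le> real n * ln (real n)"
    using h ln_n by (intro mult_right_mono) auto
  then have exponent: "-2 * e\<^sup>2 / real h \<le> -2 * ln (real n)"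
    using h ln_n by (simp add: e field_simps)
  have "\<P>(\<omega> in bernoulli_sequence p. e \<le> \<bar>real (pair_count {i. \<omega> i} n) - real h * p\<^sup>2\<bar>)
        \<le> 2 * exp (-2 * e\<^sup>2 / real h)"
    using pair_count_deviation_prob[OF p n e(1)] unfolding h_def .
  also have "\<dots> \<le> 2 * exp (-2 * ln (real n))"
    using exponent by simp
  also have "exp (-2 * ln (real n)) = 1 / real n ^ 2"
    using n by (simp add: exp_minus exp_double divide_inverse)
  finally show ?thesis
    unfolding e_def h_def by simp
qed

lemma eventually_pair_count_concentrated:
  assumes p: "0 \<le> p" "p \<le> 1"
  shows "\<exists>A. \<forall>\<^sub>F n in sequentially.
           \<bar>real (pair_count A n) - real ((n + 1) div 2) * p\<^sup>2\<bar> < sqrt (real n * ln (real n))"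
proof -
  define M where "M = bernoulli_sequence p"
  define bad where "bad n = {\<omega> \<in> space M.
    sqrt (real n * ln (real n)) \<le> \<bar>real (pair_count {i. \<omega> i} n) - real ((n + 1) div 2) * p\<^sup>2\<bar>}" for n
  interpret P: prob_space M
    unfolding M_def by (rule prob_space_bernoulli_sequence)
  have "summable (\<lambda>n. measure M (bad n))"
  proof (rule summable_comparison_test')
    show "summable (\<lambda>n. 2 * inverse (real n ^ 2))"
      by (intro summable_mult inverse_power_summable) auto
    show "norm (measure M (bad n)) \<le> 2 * inverse (real n ^ 2)" if "n \<ge> 1" for n
      using pair_count_large_deviation_prob[OF p that] by (simp add: M_def bad_def field_simps)
  qed
  moreover have "bad n \<in> P.events" for n
    unfolding bad_def M_def bernoulli_sequence_def pair_count_def by measurable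
  ultimately have "AE \<omega> in M. \<forall>\<^sub>F n in sequentially. \<omega> \<in> space M - bad n"
    by (intro borel_cantelli_AE1) (auto simp: less_top[symmetric])
  then obtain \<omega> where "\<forall>\<^sub>F n in sequentially. \<omega> \<in> space M - bad n"
    using P.AE_False by (metis (mono_tags, lifting) eventually_mono)
  then show ?thesis
    by (intro exI[of _ "{i. \<omega> i}"]) (auto simp: bad_def elim!: eventually_mono)
qed

lemma rep_count_deviation_le_sqrt_ln:
  fixes c :: real
  assumes c: "0 \<le> c" "c \<le> 1" and n: "n \<ge> 3"
    and concentrated: "\<bar>real (pair_count A n) - real ((n + 1) div 2) * c\<bar> < sqrt (real n * ln (real n))"
  shows "\<bar>real (rep_count A n) - c * real n\<bar> \<le> 3 * (sqrt (real n) * sqrt (ln (real n)))"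
proof -
  have "exp 1 \<le> real n"
    using exp_le n by linarith
  then have ln_n: "1 \<le> ln (real n)"
    using n by (subst ln_ge_iff) auto
  then have "1 * 1 \<le> real n * ln (real n)"
    using n by (intro mult_mono) auto
  then have "1 \<le> sqrt (real n * ln (real n))"
    by simp
  have "\<bar>real (rep_count A n) - c * real n\<bar>
          \<le> 2 * \<bar>real (pair_count A n) - real ((n + 1) div 2) * c\<bar> + 1"
    by (rule rep_count_deviation_le[OF c])
  also have "\<dots> \<le> 3 * sqrt (real n * ln (real n))"
    using concentrated \<open>1 \<le> sqrt (real n * ln (real n))\<close> by argo
  finally show ?thesis
    using ln_n by (simp add: real_sqrt_mult)
qed

theorem theorem12:
  fixes c :: real
  assumes "0 < c" and "c < 1"
  shows "\<exists>A :: nat set.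
           (\<lambda>n. real (rep_count A n) - c * real n)
             \<in> O(\<lambda>n. sqrt (real n) * sqrt (ln (real n)))"
proof -
  have c: "0 \<le> c" "c \<le> 1"
    using assms by auto
  then have p: "0 \<le> sqrt c" "sqrt c \<le> 1" "(sqrt c)\<^sup>2 = c"
    by auto
  obtain A where "\<forall>\<^sub>F n in sequentially.
      \<bar>real (pair_count A n) - real ((n + 1) div 2) * c\<bar> < sqrt (real n * ln (real n))"
    using eventually_pair_count_concentrated[OF p(1,2)] p(3) by auto
  then have "\<forall>\<^sub>F n in sequentially.
      norm (real (rep_count A n) - c * real n) \<le> 3 * norm (sqrt (real n) * sqrt (ln (real n)))"
    using eventually_ge_at_top[of 3]
    by eventually_elim (simp add: rep_count_deviation_le_sqrt_ln[OF c])
  then show ?thesis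
    by blast
qed

end
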